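(* Let $G$ be a cubic graph, let $M$ be a perfect matching cut of $G$, and let $C$ be a $6$-vertex cycle of $G$. If at least three outgoing edges of $V(C)$ belong to $M$, then all outgoing edges of $V(C)$ belong to $M$.
   Context: All graphs are finite, simple and undirected; a graph is cubic if every vertex has exactly three neighbours. A cutset of $G$ is a set $M \subseteq E(G)$ for which there is a bipartition $X \uplus Y = V(G)$ into two nonempty sets such that $M$ is exactly the set of edges with one endpoint in $X$ and one in $Y$. A perfect matching cut is a perfect matching (a set of edges covering every vertex exactly once) that is also a cutset. For $U \subseteq V(G)$, the outgoing edges of $U$ are the edges of $G$ with exactly one endpoint in $U$. *)

theory Defs
  imports Main
begin

definition simple_graph :: "'a set \<Rightarrow> 'a set set \<Rightarrow> bool" where
  "simple_graph V E \<longleftrightarrow> finite V \<and> (\<forall>e\<in>E. e \<subseteq> V \<and> card e = 2)"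

definition cubic :: "'a set \<Rightarrow> 'a set set \<Rightarrow> bool" where
  "cubic V E \<longleftrightarrow> simple_graph V E \<and> (\<forall>v\<in>V. card {e\<in>E. v \<in> e} = 3)"

definition perfect_matching :: "'a set \<Rightarrow> 'a set set \<Rightarrow> 'a set set \<Rightarrow> bool" where
  "perfect_matching V E M \<longleftrightarrow> M \<subseteq> E \<and> (\<forall>v\<in>V. \<exists>!e. e \<in> M \<and> v \<in> e)"

definition outgoing :: "'a set set \<Rightarrow> 'a set \<Rightarrow> 'a set set" where
  "outgoing E U = {e\<in>E. card (e \<inter> U) = 1}"

definition cutset :: "'a set \<Rightarrow> 'a set set \<Rightarrow> 'a set set \<Rightarrow> bool" where
  "cutset V E M \<longleftrightarrow> (\<exists>X Y. X \<noteq> {} \<and> Y \<noteq> {} \<and> X \<inter> Y = {} \<and> X \<union> Y = V \<and>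
      M = {e\<in>E. e \<inter> X \<noteq> {} \<and> e \<inter> Y \<noteq> {}})"

definition perfect_matching_cut :: "'a set \<Rightarrow> 'a set set \<Rightarrow> 'a set set \<Rightarrow> bool" where
  "perfect_matching_cut V E M \<longleftrightarrow> perfect_matching V E M \<and> cutset V E M"

definition is_cycle :: "'a set \<Rightarrow> 'a set set \<Rightarrow> nat \<Rightarrow> (nat \<Rightarrow> 'a) \<Rightarrow> bool" where
  "is_cycle V E k c \<longleftrightarrow> 3 \<le> k \<and> inj_on c {0..<k} \<and> c ` {0..<k} \<subseteq> V \<and>
     (\<forall>i<k. {c i, c ((i + 1) mod k)} \<in> E)"

end

theory Submission
  imports Defs
begin

(*
  Colour every vertex by its side of the cut. A cycle edge belongs to M exactly when its ends
  have different colours, so an even number of cycle edges belongs to M. If that number is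
  positive, two disjoint matching edges of the cycle cover four of its six vertices; every
  matching edge leaving the cycle uses a further cycle vertex, so at most two of them exist.
  Otherwise no cycle edge is matched, and in a cubic graph the matching edge at a cycle vertex
  is then its third edge, which is the outgoing edge there if there is one.
*)

lemma even_card_changes_iff:
  fixes f :: "nat \<Rightarrow> bool"
  shows "even (card {i. i < n \<and> f i \<noteq> f (i + 1)}) \<longleftrightarrow> f 0 = f n"
proof (induction n)
  case 0
  then show ?case by simp
next
  case (Suc n)
  have "{i. i < Suc n \<and> f i \<noteq> f (i + 1)} =
      {i. i < n \<and> f i \<noteq> f (i + 1)} \<union> (if f n \<noteq> f (Suc n) then {n} else {})"
    by (auto simp: less_Suc_eq)
  then show ?case using Suc.IH by auto
qed

lemma even_card_cyclic_changes:
  fixes f :: "nat \<Rightarrow> bool"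
  shows "even (card {i. i < k \<and> f i \<noteq> f ((i + 1) mod k)})"
proof -
  \<comment> \<open>the path version applies to \<open>\<lambda>i. f (i mod k)\<close>, which takes the same value at 0 and k\<close>
  have "{i. i < k \<and> f i \<noteq> f ((i + 1) mod k)} = {i. i < k \<and> f (i mod k) \<noteq> f ((i + 1) mod k)}"
    by (intro Collect_cong) auto
  then show ?thesis
    using even_card_changes_iff[of k "\<lambda>i. f (i mod k)"] by simp
qed

lemma cutset_obtains_side:
  assumes "cutset V E M"
  obtains X where "\<And>u v. u \<in> V \<Longrightarrow> v \<in> V \<Longrightarrow> {u, v} \<in> E \<Longrightarrow>
      {u, v} \<in> M \<longleftrightarrow> (u \<in> X) \<noteq> (v \<in> X)"
proof -
  from assms obtain X Y where "X \<inter> Y = {}" "X \<union> Y = V"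
    and M: "M = {e\<in>E. e \<inter> X \<noteq> {} \<and> e \<inter> Y \<noteq> {}}"
    unfolding cutset_def by blast
  then have Y: "Y = V - X" by blast
  show thesis
    by (rule that) (auto simp: M Y)
qed

lemma perfect_matching_edge_unique:
  assumes "perfect_matching V E M" "v \<in> V" "e \<in> M" "e' \<in> M" "v \<in> e" "v \<in> e'"
  shows "e = e'"
  using assms unfolding perfect_matching_def by blast

lemma perfect_matching_obtains_edge:
  assumes "perfect_matching V E M" "v \<in> V"
  obtains e where "e \<in> M" "v \<in> e"
  using assms unfolding perfect_matching_def by blast

lemma card_outgoing_matching_le:
  assumes M: "perfect_matching V E M" and "finite C" "C \<subseteq> V" "D \<subseteq> C"
    and D: "\<And>v. v \<in> D \<Longrightarrow> \<exists>e\<in>M. v \<in> e \<and> e \<notin> outgoing E C"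
  shows "card (outgoing E C \<inter> M) + card D \<le> card C"
proof -
  let ?O = "outgoing E C \<inter> M"
  define endpoint where "endpoint e = the_elem (e \<inter> C)" for e
  have endpoint: "endpoint e \<in> e" "endpoint e \<in> C" if "e \<in> ?O" for e
  proof -
    from that have "card (e \<inter> C) = 1" by (simp add: outgoing_def)
    then obtain x where "e \<inter> C = {x}" by (rule card_1_singletonE)
    then show "endpoint e \<in> e" "endpoint e \<in> C" by (auto simp: endpoint_def)
  qed
  have "inj_on endpoint ?O"
  proof (rule inj_onI)
    fix e e' assume "e \<in> ?O" "e' \<in> ?O" "endpoint e = endpoint e'"
    then show "e = e'"
      using endpoint perfect_matching_edge_unique[OF M] \<open>C \<subseteq> V\<close> by (metis IntD2 subsetD)
  qed
  moreover have "endpoint e \<in> C - D" if "e \<in> ?O" for e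
  proof -
    have "endpoint e \<notin> D"
    proof
      assume "endpoint e \<in> D"
      then obtain e' where "e' \<in> M" "endpoint e \<in> e'" "e' \<notin> outgoing E C" using D by blast
      then show False
        using that endpoint[OF that] perfect_matching_edge_unique[OF M] \<open>C \<subseteq> V\<close> by blast
    qed
    then show ?thesis using endpoint[OF that] by blast
  qed
  ultimately have "card ?O \<le> card (C - D)"
    using \<open>finite C\<close> by (intro card_inj_on_le) auto
  also have "\<dots> = card C - card D"
    using \<open>finite C\<close> \<open>D \<subseteq> C\<close> by (simp add: card_Diff_subset finite_subset)
  finally show ?thesis
    using card_mono[OF \<open>finite C\<close> \<open>D \<subseteq> C\<close>] by linarith
qed

lemma cubic_incident_edges_eq:
  assumes "cubic V E" "v \<in> V" "{a, b, d} \<subseteq> E" "v \<in> a" "v \<in> b" "v \<in> d"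
    and "a \<noteq> b" "a \<noteq> d" "b \<noteq> d"
  shows "{e\<in>E. v \<in> e} = {a, b, d}"
proof -
  have card: "card {e\<in>E. v \<in> e} = 3"
    using assms(1,2) by (simp add: cubic_def)
  then have "finite {e\<in>E. v \<in> e}" by (intro card_ge_0_finite) simp
  moreover have "{a, b, d} \<subseteq> {e\<in>E. v \<in> e}" using assms(3-6) by auto
  ultimately show ?thesis
    using card assms(7-9) by (intro card_subset_eq[symmetric]) auto
qed

lemma cycle_vertex_eq_iff:
  assumes "is_cycle V E k c" "i < k" "j < k"
  shows "c i = c j \<longleftrightarrow> i = j"
  using assms unfolding is_cycle_def by (auto dest: inj_onD)

lemma card_cycle_edge:
  assumes cyc: "is_cycle V E k c" and "i < k"
  shows "card {c i, c ((i + 1) mod k)} = 2"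
proof -
  have "k \<noteq> 1" using cyc by (simp add: is_cycle_def)
  then have "c i \<noteq> c ((i + 1) mod k)"
    using cycle_vertex_eq_iff[OF cyc] \<open>i < k\<close> by (simp add: mod_Suc)
  then show ?thesis by simp
qed

lemma cycle_edge_eq_iff:
  assumes cyc: "is_cycle V E k c" and "i < k" "j < k"
  shows "{c i, c ((i + 1) mod k)} = {c j, c ((j + 1) mod k)} \<longleftrightarrow> i = j"
proof
  assume eq: "{c i, c ((i + 1) mod k)} = {c j, c ((j + 1) mod k)}"
  have "3 \<le> k" using cyc by (simp add: is_cycle_def)
  show "i = j"
  proof (rule ccontr)
    assume "i \<noteq> j"
    then have "c i \<noteq> c j" using cycle_vertex_eq_iff[OF cyc \<open>i < k\<close> \<open>j < k\<close>] by simp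
    with eq have "c i = c ((j + 1) mod k)" "c j = c ((i + 1) mod k)"
      by (metis doubleton_eq_iff)+
    then have "i = (j + 1) mod k" "j = (i + 1) mod k"
      using cycle_vertex_eq_iff[OF cyc] \<open>i < k\<close> \<open>j < k\<close>
      by (metis mod_less_divisor zero_less_iff_neq_zero not_less_zero)+
    then have "((j + 1) mod k + 1) mod k = j" by metis
    moreover have "((j + 1) mod k + 1) mod k \<noteq> j"
      using \<open>3 \<le> k\<close> \<open>j < k\<close> by (simp add: mod_Suc)
    ultimately show False by contradiction
  qed
qed simp

lemma cycle_edge_not_outgoing:
  assumes cyc: "is_cycle V E k c" and "i < k"
  shows "{c i, c ((i + 1) mod k)} \<notin> outgoing E (c ` {0..<k})"
proof -
  have "{c i, c ((i + 1) mod k)} \<subseteq> c ` {0..<k}" using \<open>i < k\<close> by auto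
  then show ?thesis
    using card_cycle_edge[OF assms] by (simp add: outgoing_def Int_absorb2)
qed

lemma even_card_cycle_cut_edges:
  assumes "cutset V E M" and cyc: "is_cycle V E k c"
  shows "even (card {i. i < k \<and> {c i, c ((i + 1) mod k)} \<in> M})"
proof -
  obtain X where side: "\<And>u v. u \<in> V \<Longrightarrow> v \<in> V \<Longrightarrow> {u, v} \<in> E \<Longrightarrow>
      {u, v} \<in> M \<longleftrightarrow> (u \<in> X) \<noteq> (v \<in> X)"
    using cutset_obtains_side[OF assms(1)] by blast
  have "{i. i < k \<and> {c i, c ((i + 1) mod k)} \<in> M} =
      {i. i < k \<and> (c i \<in> X) \<noteq> (c ((i + 1) mod k) \<in> X)}"
  proof (intro Collect_cong conj_cong refl)
    fix i assume "i < k"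
    moreover have "0 < k" using cyc by (simp add: is_cycle_def)
    ultimately show "{c i, c ((i + 1) mod k)} \<in> M \<longleftrightarrow> (c i \<in> X) \<noteq> (c ((i + 1) mod k) \<in> X)"
      using cyc by (intro side) (auto simp: is_cycle_def)
  qed
  then show ?thesis
    using even_card_cyclic_changes[of k "\<lambda>i. c i \<in> X"] by simp
qed

lemma card_outgoing_cycle_matching_cut_le:
  assumes pmc: "perfect_matching_cut V E M" and cyc: "is_cycle V E k c"
    and "\<exists>i<k. {c i, c ((i + 1) mod k)} \<in> M"
  shows "card (outgoing E (c ` {0..<k}) \<inter> M) + 4 \<le> k"
proof -
  let ?C = "c ` {0..<k}"
  let ?edge = "\<lambda>i. {c i, c ((i + 1) mod k)}"
  have M: "perfect_matching V E M" and "cutset V E M"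
    using pmc by (simp_all add: perfect_matching_cut_def)
  have "0 < k" "?C \<subseteq> V" "inj_on c {0..<k}" using cyc by (auto simp: is_cycle_def)
  have edge_sub: "?edge i \<subseteq> ?C" if "i < k" for i
    using that \<open>0 < k\<close> by auto
  define I where "I = {i. i < k \<and> ?edge i \<in> M}"
  have "finite I" "I \<noteq> {}" using assms(3) by (auto simp: I_def)
  moreover have "even (card I)"
    unfolding I_def using even_card_cycle_cut_edges[OF \<open>cutset V E M\<close> cyc] .
  ultimately have "\<not> card I \<le> 1"
    by (metis card_0_eq le_SucE le_zero_eq odd_one One_nat_def)
  then obtain i j where "i \<in> I" "j \<in> I" "i \<noteq> j"
    using card_le_Suc0_iff_eq[OF \<open>finite I\<close>] by auto
  then have ij: "i < k" "j < k" "?edge i \<in> M" "?edge j \<in> M" by (auto simp: I_def)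
  have "?edge i \<noteq> ?edge j" using cycle_edge_eq_iff[OF cyc ij(1,2)] \<open>i \<noteq> j\<close> by blast
  then have "?edge i \<inter> ?edge j = {}"
    using perfect_matching_edge_unique[OF M] ij edge_sub \<open>?C \<subseteq> V\<close> by blast
  then have "card (?edge i \<union> ?edge j) = card (?edge i) + card (?edge j)"
    by (intro card_Un_disjoint) auto
  also have "\<dots> = 4" using card_cycle_edge[OF cyc] ij by simp
  finally have "card (?edge i \<union> ?edge j) = 4" .
  moreover have "card (outgoing E ?C \<inter> M) + card (?edge i \<union> ?edge j) \<le> card ?C"
  proof (rule card_outgoing_matching_le[OF M])
    fix v assume "v \<in> ?edge i \<union> ?edge j"
    then show "\<exists>e\<in>M. v \<in> e \<and> e \<notin> outgoing E ?C"
      using ij cycle_edge_not_outgoing[OF cyc] by blast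
  qed (use edge_sub ij \<open>?C \<subseteq> V\<close> in auto)
  moreover have "card ?C = k" using \<open>inj_on c {0..<k}\<close> by (simp add: card_image)
  ultimately show ?thesis by simp
qed

lemma outgoing_cycle_subset_matching:
  assumes "cubic V E" and M: "perfect_matching V E M" and cyc: "is_cycle V E k c"
    and unmatched: "\<forall>i<k. {c i, c ((i + 1) mod k)} \<notin> M"
  shows "outgoing E (c ` {0..<k}) \<subseteq> M"
proof
  let ?C = "c ` {0..<k}"
  let ?edge = "\<lambda>i. {c i, c ((i + 1) mod k)}"
  fix e assume e: "e \<in> outgoing E ?C"
  then have "e \<in> E" by (simp add: outgoing_def)
  from e have "card (e \<inter> ?C) = 1" by (simp add: outgoing_def)
  then obtain x where "e \<inter> ?C = {x}" by (rule card_1_singletonE)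
  then have "x \<in> e" "x \<in> ?C" by auto
  then obtain i where i: "i < k" "c i \<in> e" by auto
  have "3 \<le> k" "c i \<in> V" and edges: "\<And>j. j < k \<Longrightarrow> ?edge j \<in> E"
    using cyc i by (auto simp: is_cycle_def)
  define j where "j = (if i = 0 then k - 1 else i - 1)"
  have j: "j < k" "(j + 1) mod k = i"
    using \<open>3 \<le> k\<close> \<open>i < k\<close> by (auto simp: j_def)
  have "j \<noteq> i"
    using card_cycle_edge[OF cyc i(1)] j by auto
  then have "?edge i \<noteq> ?edge j" using cycle_edge_eq_iff[OF cyc i(1) j(1)] by simp
  moreover have "e \<noteq> ?edge i" "e \<noteq> ?edge j"
    using e cycle_edge_not_outgoing[OF cyc] i(1) j(1) by blast+
  ultimately have incident: "{f\<in>E. c i \<in> f} = {?edge i, ?edge j, e}"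
    by (intro cubic_incident_edges_eq[OF assms(1) \<open>c i \<in> V\<close>]) (use edges i j \<open>e \<in> E\<close> in auto)
  obtain m where "m \<in> M" "c i \<in> m"
    using perfect_matching_obtains_edge[OF M \<open>c i \<in> V\<close>] .
  moreover have "m \<in> E" using \<open>m \<in> M\<close> M by (auto simp: perfect_matching_def)
  ultimately have "m \<in> {?edge i, ?edge j, e}" unfolding incident[symmetric] by simp
  moreover have "m \<noteq> ?edge i" "m \<noteq> ?edge j"
    using unmatched i(1) j(1) \<open>m \<in> M\<close> by auto
  ultimately have "m = e" by simp
  with \<open>m \<in> M\<close> show "e \<in> M" by simp
qed

theorem lemma5:
  fixes V :: "'a set" and E M :: "'a set set" and c :: "nat \<Rightarrow> 'a"
  assumes "cubic V E"
    and "perfect_matching_cut V E M"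
    and "is_cycle V E 6 c"
    and "card (outgoing E (c ` {0..<6}) \<inter> M) \<ge> 3"
  shows "outgoing E (c ` {0..<6}) \<subseteq> M"
proof (cases "\<exists>i<6. {c i, c ((i + 1) mod 6)} \<in> M")
  case True
  with card_outgoing_cycle_matching_cut_le[OF assms(2,3)] assms(4) show ?thesis by simp
next
  case False
  with outgoing_cycle_subset_matching[OF assms(1) _ assms(3)] assms(2) show ?thesis
    by (simp add: perfect_matching_cut_def)
qed

end
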